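(* In the double-option game, let $(b,r)$ with $b,r\ge0$ be any proposal and let bidder 2 hold any belief (probability distribution) about $v_1$ on $[\underline v_1,\bar v_1]$ after observing $(b,r)$. Then bidder 2's best response can be described by a pair of critical values $(v_2^b,v_2^r)$ satisfying $$v_2^b\le \min\{b+r,\bar v_2\}\le v_2^r\le \bar v_2,$$ such that type $v_2$ accepts the bribe $b$ if $v_2\le v_2^b$, rejects the proposal if $v_2^b<v_2<v_2^r$, and accepts the request $r$ if $v_2\ge v_2^r$.
   Context: Two risk-neutral bidders $i=1,2$ compete for one indivisible object. Bidder $i$'s valuation $v_i$ is private, drawn independently from a cdf $F_i$ on $[\underline v_i,\bar v_i]$ with $0\le \underline v_i<\bar v_i<\infty$, with continuous density $0<f_i<\infty$ on that interval. Double-option game: bidder 1 learns $v_1$ and proposes $(b,r)$, $b,r\ge 0$. Bidder 2 learns $v_2$, observes $(b,r)$ and either accepts the bribe (payoffs $(v_1-b,\ b)$ to bidders 1 and 2), accepts the request (payoffs $(r,\ v_2-r)$), or rejects, in which case both bid truthfully in a second-price auction without reserve price (payoffs $((v_1-v_2)^+,\ (v_2-v_1)^+)$). A best response of bidder 2 to a belief is a choice for each type $v_2$ maximizing her expected payoff given the belief about $v_1$. *)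

theory Defs
  imports "HOL-Probability.Probability"
begin

datatype response = AcceptBribe | AcceptRequest | Reject

definition payoff2 :: "real \<Rightarrow> real \<Rightarrow> response \<Rightarrow> real \<Rightarrow> real \<Rightarrow> real" where
  "payoff2 b r a v1 v2 = (case a of
      AcceptBribe \<Rightarrow> b
    | AcceptRequest \<Rightarrow> v2 - r
    | Reject \<Rightarrow> max (v2 - v1) 0)"

definition exp_payoff2 :: "real measure \<Rightarrow> real \<Rightarrow> real \<Rightarrow> response \<Rightarrow> real \<Rightarrow> real" where
  "exp_payoff2 M b r a v2 = integral\<^sup>L M (\<lambda>v1. payoff2 b r a v1 v2)"

definition best_response_on ::
  "real measure \<Rightarrow> real \<Rightarrow> real \<Rightarrow> real set \<Rightarrow> (real \<Rightarrow> response) \<Rightarrow> bool" where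
  "best_response_on M b r S \<sigma> \<longleftrightarrow>
     (\<forall>v2\<in>S. \<forall>a. exp_payoff2 M b r a v2 \<le> exp_payoff2 M b r (\<sigma> v2) v2)"

definition threshold_strategy :: "real \<Rightarrow> real \<Rightarrow> real \<Rightarrow> response" where
  "threshold_strategy vb vr v2 =
     (if v2 \<le> vb then AcceptBribe else if v2 < vr then Reject else AcceptRequest)"

end

theory Submission
  imports Defs
begin

text \<open>
  Type \<open>v\<close> of bidder 2 gets \<open>b\<close> from the bribe, \<open>v - r\<close> from the request and
  \<open>\<phi> v = E (v - v\<^sub>1)\<^sup>+\<close> from rejecting. The function \<open>\<phi>\<close> is nondecreasing, vanishes at 0
  (valuations are nonnegative) and grows with slope at most 1, so \<open>\<phi> v \<le> b\<close> holds exactly on an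
  initial segment \<open>[0, v\<^sub>b]\<close> and \<open>\<phi> v \<le> v - r\<close> exactly on a final segment \<open>[v\<^sub>r, \<dots>)\<close>,
  while the bribe beats the request precisely below \<open>b + r\<close>. Cutting both segments at the
  smaller of \<open>b + r\<close> and the largest type yields the thresholds; they are a supremum and an
  infimum, attained thanks to the slope bound and to monotonicity respectively.
\<close>

definition reject_value :: "real measure \<Rightarrow> real \<Rightarrow> real" where
  "reject_value M v = (LINT v1|M. max (v - v1) 0)"

definition response_value :: "real \<Rightarrow> real \<Rightarrow> (real \<Rightarrow> real) \<Rightarrow> response \<Rightarrow> real \<Rightarrow> real" where
  "response_value b r \<phi> a v =
     (case a of AcceptBribe \<Rightarrow> b | AcceptRequest \<Rightarrow> v - r | Reject \<Rightarrow> \<phi> v)"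

lemma mono_le_const_threshold:
  fixes \<phi> :: "real \<Rightarrow> real"
  assumes "mono \<phi>" and slope: "\<And>v w. v \<le> w \<Longrightarrow> \<phi> w \<le> \<phi> v + (w - v)"
    and "\<phi> a \<le> b" and "a \<le> c"
  shows "\<exists>t\<in>{a..c}. \<forall>v\<in>{a..c}. \<phi> v \<le> b \<longleftrightarrow> v \<le> t"
proof -
  define S where "S = {v\<in>{a..c}. \<phi> v \<le> b}"
  define t where "t = Sup S"
  have "a \<in> S" using assms by (simp add: S_def)
  moreover have "bdd_above S" by (auto simp: S_def bdd_above_def)
  ultimately have upper: "v \<le> t" if "v \<in> S" for v
    using that by (simp add: t_def cSup_upper)
  have "S \<noteq> {}" using \<open>a \<in> S\<close> by blast
  have t_range: "t \<in> {a..c}"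
    using upper[OF \<open>a \<in> S\<close>] cSup_least[OF \<open>S \<noteq> {}\<close>, of c] by (auto simp: S_def t_def)
  have "s \<le> t + b - \<phi> t" if "s \<in> S" for s
    using slope[OF upper[OF that]] that by (simp add: S_def)
  then have "t \<le> t + b - \<phi> t"
    unfolding t_def by (rule cSup_least[OF \<open>S \<noteq> {}\<close>])
  then have "\<phi> t \<le> b" by simp
  then have "\<phi> v \<le> b \<longleftrightarrow> v \<le> t" if "v \<in> {a..c}" for v
    using that upper \<open>mono \<phi>\<close> by (auto simp: S_def dest: monoD)
  with t_range show ?thesis by blast
qed

lemma mono_le_diagonal_threshold:
  fixes \<phi> :: "real \<Rightarrow> real"
  assumes "mono \<phi>" and slope: "\<And>v w. v \<le> w \<Longrightarrow> \<phi> w \<le> \<phi> v + (w - v)"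
    and "a \<le> c"
  shows "\<exists>t\<in>{a..c}. \<forall>v\<in>{a..<c}. \<phi> v \<le> v - r \<longleftrightarrow> t \<le> v"
proof (cases "\<exists>v\<in>{a..c}. \<phi> v \<le> v - r")
  case False
  with \<open>a \<le> c\<close> show ?thesis by (intro bexI[of _ c]) auto
next
  case True
  define T where "T = {v\<in>{a..c}. \<phi> v \<le> v - r}"
  define t where "t = Inf T"
  have "T \<noteq> {}" using True by (auto simp: T_def)
  have "bdd_below T" by (auto simp: T_def bdd_below_def)
  then have lower: "t \<le> v" if "v \<in> T" for v
    using that by (simp add: t_def cInf_lower)
  have t_range: "t \<in> {a..c}"
    using cInf_greatest[OF \<open>T \<noteq> {}\<close>, of a] \<open>T \<noteq> {}\<close> lower by (force simp: T_def t_def)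
  have "\<phi> t + r \<le> s" if "s \<in> T" for s
    using monoD[OF \<open>mono \<phi>\<close> lower[OF that]] that by (simp add: T_def)
  then have "\<phi> t + r \<le> t"
    unfolding t_def by (rule cInf_greatest[OF \<open>T \<noteq> {}\<close>])
  then have "\<phi> v \<le> v - r \<longleftrightarrow> t \<le> v" if "v \<in> {a..<c}" for v
    using that lower slope[of t v] by (auto simp: T_def)
  with t_range show ?thesis by blast
qed

lemma threshold_strategy_maximizes_response_value:
  fixes \<phi> :: "real \<Rightarrow> real"
  assumes "mono \<phi>" and slope: "\<And>v w. v \<le> w \<Longrightarrow> \<phi> w \<le> \<phi> v + (w - v)"
    and "\<phi> 0 \<le> b" and "0 \<le> b" and "0 \<le> r" and "0 \<le> u"
  shows "\<exists>vb vr. vb \<le> min (b + r) u \<and> min (b + r) u \<le> vr \<and> vr \<le> u \<and>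
           (\<forall>v\<in>{0..<u}. \<forall>a. response_value b r \<phi> a v
                                \<le> response_value b r \<phi> (threshold_strategy vb vr v) v)"
proof -
  define m where "m = min (b + r) u"
  have "0 \<le> m" using assms by (simp add: m_def)
  obtain vb where vb: "vb \<in> {0..m}" and bribe: "\<And>v. v \<in> {0..m} \<Longrightarrow> \<phi> v \<le> b \<longleftrightarrow> v \<le> vb"
    using mono_le_const_threshold[OF \<open>mono \<phi>\<close> slope \<open>\<phi> 0 \<le> b\<close> \<open>0 \<le> m\<close>] by blast
  have "m \<le> u" by (simp add: m_def)
  obtain vr where vr: "vr \<in> {m..u}"
    and request: "\<And>v. v \<in> {m..<u} \<Longrightarrow> \<phi> v \<le> v - r \<longleftrightarrow> vr \<le> v"
    using mono_le_diagonal_threshold[OF \<open>mono \<phi>\<close> slope \<open>m \<le> u\<close>, of r] by blast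
  have "response_value b r \<phi> a v \<le> response_value b r \<phi> (threshold_strategy vb vr v) v"
    if v: "v \<in> {0..<u}" for v a
  proof -
    have m_below: "m \<le> v \<Longrightarrow> m = b + r" using v by (auto simp: m_def)
    consider "v \<le> vb" | "vb < v" "v < vr" | "vr \<le> v" "\<not> v \<le> vb" by linarith
    then show ?thesis
    proof cases
      case 1
      with vb v bribe[of v] have "\<phi> v \<le> b" "v - r \<le> b" by (auto simp: m_def)
      with 1 show ?thesis by (cases a) (auto simp: response_value_def threshold_strategy_def)
    next
      case 2
      have "b \<le> \<phi> v \<and> v - r \<le> \<phi> v"
      proof (cases "v \<le> m")
        case True
        with 2 v bribe[of v] show ?thesis by (auto simp: m_def)
      next
        case False
        with 2 v m_below request[of v] show ?thesis by auto
      qed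
      with 2 show ?thesis by (cases a) (auto simp: response_value_def threshold_strategy_def)
    next
      case 3
      with vr v m_below request[of v] have "\<phi> v \<le> v - r" "b \<le> v - r" by auto
      with 3 v show ?thesis by (cases a) (auto simp: response_value_def threshold_strategy_def)
    qed
  qed
  moreover have "vb \<le> m" "m \<le> vr" "vr \<le> u" using vb vr by auto
  ultimately show ?thesis unfolding m_def by blast
qed

locale nonneg_belief = prob_space M for M :: "real measure" +
  assumes sets_eq_borel: "sets M = sets borel"
    and AE_nonneg: "AE v1 in M. 0 \<le> v1"
begin

lemma integrable_reject_payoff: "integrable M (\<lambda>v1. max (v - v1) 0)"
proof (rule integrable_const_bound[where B = "\<bar>v\<bar>"])
  show "AE v1 in M. norm (max (v - v1) 0) \<le> \<bar>v\<bar>"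
    using AE_nonneg by eventually_elim auto
  show "(\<lambda>v1. max (v - v1) 0) \<in> borel_measurable M"
    unfolding measurable_cong_sets[OF sets_eq_borel refl] by measurable
qed

lemma reject_value_0: "reject_value M 0 = 0"
proof -
  have "AE v1 in M. max (0 - v1) 0 = (0::real)"
    using AE_nonneg by eventually_elim auto
  then show ?thesis unfolding reject_value_def by (rule integral_eq_zero_AE)
qed

lemma mono_reject_value: "mono (reject_value M)"
  by (rule monoI, unfold reject_value_def)
    (auto intro: integral_mono integrable_reject_payoff)

lemma reject_value_le_add:
  assumes "v \<le> w"
  shows "reject_value M w \<le> reject_value M v + (w - v)"
proof -
  have "reject_value M w \<le> (LINT v1|M. max (v - v1) 0 + (w - v))"
    unfolding reject_value_def using assms
    by (intro integral_mono) (auto intro: integrable_reject_payoff)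
  also have "\<dots> = reject_value M v + (w - v)"
    using integrable_reject_payoff by (simp add: reject_value_def prob_space)
  finally show ?thesis .
qed

lemma exp_payoff2_eq_response_value:
  "exp_payoff2 M b r a v = response_value b r (reject_value M) a v"
  by (cases a) (simp_all add: exp_payoff2_def payoff2_def response_value_def
      reject_value_def prob_space)

lemma best_response_on_threshold_strategy:
  assumes "0 \<le> b" and "0 \<le> r" and "0 \<le> u"
  shows "\<exists>vb vr. vb \<le> min (b + r) u \<and> min (b + r) u \<le> vr \<and> vr \<le> u \<and>
           best_response_on M b r {0..<u} (threshold_strategy vb vr)"
  using threshold_strategy_maximizes_response_value[OF mono_reject_value reject_value_le_add]
    reject_value_0 assms
  by (simp add: best_response_on_def exp_payoff2_eq_response_value)

end

theorem lemma1:
  fixes lv1 uv1 lv2 uv2 b r :: real and M :: "real measure"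
  assumes "0 \<le> lv1" and "lv1 < uv1" and "0 \<le> lv2" and "lv2 < uv2"
    and "0 \<le> b" and "0 \<le> r"
    and "prob_space M" and "sets M = sets borel"
    and "AE v1 in M. v1 \<in> {lv1..uv1}"
  shows "\<exists>vb vr. vb \<le> min (b + r) uv2 \<and> min (b + r) uv2 \<le> vr \<and> vr \<le> uv2 \<and>
           best_response_on M b r {lv2..<uv2} (threshold_strategy vb vr)"
proof -
  \<comment> \<open>Only nonnegativity of \<open>v\<^sub>1\<close> matters.\<close>
  have "AE v1 in M. 0 \<le> v1"
    using assms(9) by eventually_elim (use assms(1) in auto)
  then interpret nonneg_belief M
    using assms(7,8) by (simp add: nonneg_belief_def nonneg_belief_axioms_def)
  have "{lv2..<uv2} \<subseteq> {0..<uv2}" using assms(3) by auto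
  then have "best_response_on M b r {lv2..<uv2} \<sigma>"
    if "best_response_on M b r {0..<uv2} \<sigma>" for \<sigma>
    using that by (auto simp: best_response_on_def)
  with best_response_on_threshold_strategy[OF assms(5,6), of uv2] assms(3,4) show ?thesis
    by fastforce
qed

end
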